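(* Let $k\ge1$, and let $\mathcal P=\{p_1,\dots,p_{k^2}\}$ be a family of real polynomials in the commuting variables $x_1,\dots,x_{2k^2}$ admitting an nc representation $p(X,Y)$ of degree $d>1$. Suppose at least one polynomial of the family contains a term $e\,x_i^sx_j^t$ with $e\ne0$, $t\ge2$ and $s\ge t+2$. Then: (1) there is $a\in\{1,\dots,k\}$ such that one of $x_i,x_j$ is the $(a,a)$ entry of $X$ and the other is the $(a,a)$ entry of $Y$; (2) for each $n\in\{1,\dots,k\}$, letting $x_{i_n}$ be the $(n,n)$ entry of the matrix (among $X,Y$) containing $x_i$ and $x_{j_n}$ the $(n,n)$ entry of the other matrix, the polynomial in position $(n,n)$ of the array $p(X,Y)$ contains the term $e\,x_{i_n}^sx_{j_n}^t$; thus there are exactly $k$ such diagonal pairs and $k$ polynomials $p_{\ell_1},\dots,p_{\ell_k}$ with $p_{\ell_n}=e\,x_{i_n}^sx_{j_n}^t+\cdots$, each occupying the same diagonal position as $x_{i_n}$ and $x_{j_n}$.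
   Context: The family $\mathcal P$ admits an nc representation $p(X,Y)$ if there are $k\times k$ matrices $X,Y$ whose $2k^2$ entries are the variables $x_1,\dots,x_{2k^2}$, each used exactly once, and a noncommutative polynomial $p$ in two letters with real coefficients such that the matrix $p(X,Y)$ is a $k\times k$ array whose entries are $p_1,\dots,p_{k^2}$, each exactly once. A "term" means a monomial with its nonzero coefficient after collecting like terms. *)

theory Defs
  imports Complex_Main "HOL-Library.Multiset"
begin

text \<open>Commutative real polynomials in variables indexed by nat: coefficient
functions on monomials, a monomial being a multiset of variable indices.
Noncommutative polynomials in two letters: coefficient functions on words over
bool (False = letter X, True = letter Y), with finite support.
Variables are indexed 0 ..< 2k^2 and the family p_1..p_(k^2) is indexed 0 ..< k^2.
The variable placement is M :: bool => nat => nat => nat: M False r c is the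
index of the variable at entry (r,c) of X, M True r c that of Y (0-based).\<close>

type_synonym cpoly = "nat multiset \<Rightarrow> real"
type_synonym ncpoly = "bool list \<Rightarrow> real"

definition nc_support :: "ncpoly \<Rightarrow> bool list set" where
  "nc_support p = {w. p w \<noteq> 0}"

definition nc_degree :: "ncpoly \<Rightarrow> nat" where
  "nc_degree p = Max (length ` nc_support p)"

definition index_paths :: "nat \<Rightarrow> nat \<Rightarrow> nat \<Rightarrow> nat \<Rightarrow> nat list set" where
  "index_paths k m a b = {cs. length cs = Suc m \<and> hd cs = a \<and> last cs = b \<and> set cs \<subseteq> {..<k}}"

definition path_monomial :: "(bool \<Rightarrow> nat \<Rightarrow> nat \<Rightarrow> nat) \<Rightarrow> bool list \<Rightarrow> nat list \<Rightarrow> nat multiset" where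
  "path_monomial M w cs = mset (map (\<lambda>l. M (w ! l) (cs ! l) (cs ! Suc l)) [0..<length w])"

text \<open>Entry (a,b) of the matrix p(X,Y), as a commutative polynomial (coefficient function).\<close>
definition nc_entry :: "nat \<Rightarrow> (bool \<Rightarrow> nat \<Rightarrow> nat \<Rightarrow> nat) \<Rightarrow> ncpoly \<Rightarrow> nat \<Rightarrow> nat \<Rightarrow> cpoly" where
  "nc_entry k M p a b = (\<lambda>\<mu>. \<Sum>w\<in>nc_support p.
      p w * real (card {cs \<in> index_paths k (length w) a b. path_monomial M w cs = \<mu>}))"

definition nc_representation :: "nat \<Rightarrow> (nat \<Rightarrow> cpoly) \<Rightarrow> (bool \<Rightarrow> nat \<Rightarrow> nat \<Rightarrow> nat) \<Rightarrow> ncpoly \<Rightarrow> bool" where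
  "nc_representation k P M p \<longleftrightarrow>
     finite (nc_support p) \<and>
     bij_betw (\<lambda>(z, r, c). M z r c) (UNIV \<times> {..<k} \<times> {..<k}) {..<2 * k^2} \<and>
     (\<exists>\<sigma>. bij_betw \<sigma> ({..<k} \<times> {..<k}) {..<k^2} \<and>
          (\<forall>a<k. \<forall>b<k. nc_entry k M p a b = P (\<sigma> (a, b))))"

end

theory Submission
  imports Defs
begin

text \<open>A term of the entry (a,b) of p(X,Y) comes from a word w and an index walk
a = c_0, ..., c_m = b; the letter w_l contributes the matrix entry at (c_l, c_{l+1}).
If the term is x_i^s x_j^t, the walk uses the edge of x_i exactly s times and that of
x_j exactly t times. Along a walk every vertex is left and entered equally often, up
to the two endpoints, so s \<ge> t + 2 and t \<ge> 2 force both edges to be loops. A walk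
made of loops is constant, hence x_i and x_j sit at the same diagonal position (a,a)
and b = a. Conversely the only walk from (n,n) to (n,n) producing a product of
diagonal entries is the constant one, so the coefficient of
x_{i_n}^s x_{j_n}^t in the entry (n,n) is the sum of p(w) over the words w with s
copies of one letter and t of the other, independently of n.\<close>

lemma set_tl_subset: "set (tl xs) \<subseteq> set xs"
  by (cases xs) auto

lemma size_filter_replicate_mset:
  "size (filter_mset P (replicate_mset n x)) = n * of_bool (P x)"
  by (induction n) auto

lemma image_mset_inj_on_eq:
  assumes "image_mset f A = image_mset f B" and "inj_on f (set_mset A \<union> set_mset B)"
  shows "A = B"
  using image_mset_eq_image_mset_plusD[of f A B "{#}"] assms by auto

definition walk_edges :: "'a list \<Rightarrow> ('a \<times> 'a) multiset" where
  "walk_edges cs = mset (zip cs (tl cs))"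

lemma walk_edges_Cons_Cons: "walk_edges (x # y # ys) = add_mset (x, y) (walk_edges (y # ys))"
  by (simp add: walk_edges_def)

lemma walk_edges_vertices: "e \<in># walk_edges cs \<Longrightarrow> fst e \<in> set cs \<and> snd e \<in> set cs"
proof (cases e)
  case (Pair x y)
  then show "e \<in># walk_edges cs \<Longrightarrow> ?thesis"
    using set_zip_leftD[of x y cs "tl cs"] set_zip_rightD[of x y cs "tl cs"] set_tl_subset[of cs]
    by (auto simp: walk_edges_def)
qed

lemma walk_edges_balance:
  assumes "cs \<noteq> []"
  shows "int (size {#e \<in># walk_edges cs. fst e = v#}) - int (size {#e \<in># walk_edges cs. snd e = v#})
         = of_bool (hd cs = v) - of_bool (last cs = v)"
  using assms
proof (induction cs rule: induct_list012)
  case (3 x y ys)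
  then show ?case by (auto simp: walk_edges_Cons_Cons)
qed (auto simp: walk_edges_def)

lemma walk_constant_if_loops:
  assumes "\<forall>e \<in># walk_edges cs. fst e = snd e" and "x \<in> set cs"
  shows "x = hd cs"
  using assms
proof (induction cs rule: induct_list012)
  case (3 x y ys)
  then show ?case by (auto simp: walk_edges_Cons_Cons)
qed (auto simp: walk_edges_def)

lemma loops_if_two_edge_balance:
  fixes r1 c1 r2 c2 :: 'a
  assumes bal: "\<And>v. \<bar>int s * (of_bool (r1 = v) - of_bool (c1 = v))
                     + int t * (of_bool (r2 = v) - of_bool (c2 = v))\<bar> \<le> 1"
    and "t \<ge> 2" and "s \<ge> t + 2"
  shows "r1 = c1 \<and> r2 = c2"
proof
  show "r1 = c1"
  proof (rule ccontr)
    assume "r1 \<noteq> c1"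
    with bal[of r1] \<open>s \<ge> t + 2\<close> show False
      by (cases "r2 = r1"; cases "c2 = r1"; simp)
  qed
  with bal[of r2] \<open>t \<ge> 2\<close> show "r2 = c2"
    by (cases "r2 = c2"; cases "r1 = r2"; simp)
qed

definition path_entries :: "bool list \<Rightarrow> nat list \<Rightarrow> (bool \<times> nat \<times> nat) multiset" where
  "path_entries w cs = mset (zip w (zip cs (tl cs)))"

lemma path_monomial_eq_image_path_entries:
  assumes "length cs = Suc (length w)"
  shows "path_monomial M w cs = image_mset (\<lambda>(z, r, c). M z r c) (path_entries w cs)"
proof -
  have "map (\<lambda>l. M (w ! l) (cs ! l) (cs ! Suc l)) [0..<length w]
        = map (\<lambda>(z, r, c). M z r c) (zip w (zip cs (tl cs)))"
    using assms by (intro nth_equalityI) (auto simp: nth_tl)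
  then show ?thesis
    by (simp add: path_monomial_def path_entries_def flip: mset_map)
qed

lemma image_fst_path_entries:
  "length cs = Suc (length w) \<Longrightarrow> image_mset fst (path_entries w cs) = mset w"
  by (simp add: path_entries_def flip: mset_map)

lemma image_snd_path_entries:
  "length cs = Suc (length w) \<Longrightarrow> image_mset snd (path_entries w cs) = walk_edges cs"
  by (simp add: path_entries_def walk_edges_def flip: mset_map)

lemma path_entries_replicate:
  "path_entries w (replicate (Suc (length w)) n) = image_mset (\<lambda>z. (z, n, n)) (mset w)"
  unfolding path_entries_def by (induction w) auto

lemma path_monomial_if_nc_entry_nonzero:
  assumes "nc_entry k M p a b \<mu> \<noteq> 0"
  obtains w cs where "cs \<in> index_paths k (length w) a b" and "path_monomial M w cs = \<mu>"
proof -
  from assms obtain w where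
    "p w * real (card {cs \<in> index_paths k (length w) a b. path_monomial M w cs = \<mu>}) \<noteq> 0"
    unfolding nc_entry_def by (meson sum.not_neutral_contains_not_neutral)
  then have "{cs \<in> index_paths k (length w) a b. path_monomial M w cs = \<mu>} \<noteq> {}"
    by (metis card.empty mult_zero_right of_nat_0)
  with that show ?thesis
    by blast
qed

context
  fixes k :: nat and M :: "bool \<Rightarrow> nat \<Rightarrow> nat \<Rightarrow> nat"
  assumes inj_M: "inj_on (\<lambda>(z, r, c). M z r c) (UNIV \<times> {..<k} \<times> {..<k})"
begin

lemma path_entries_eq_if_path_monomial_eq:
  assumes cs: "cs \<in> index_paths k (length w) a b"
    and T: "set_mset T \<subseteq> UNIV \<times> {..<k} \<times> {..<k}"
    and eq: "path_monomial M w cs = image_mset (\<lambda>(z, r, c). M z r c) T"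
  shows "path_entries w cs = T"
proof (rule image_mset_inj_on_eq)
  from cs have len: "length cs = Suc (length w)" and "set cs \<subseteq> {..<k}"
    by (auto simp: index_paths_def)
  have "snd x \<in># walk_edges cs" if "x \<in># path_entries w cs" for x
    using that image_snd_path_entries[OF len] by (metis image_eqI set_image_mset)
  with \<open>set cs \<subseteq> {..<k}\<close> have "set_mset (path_entries w cs) \<subseteq> UNIV \<times> {..<k} \<times> {..<k}"
    by (force dest: walk_edges_vertices)
  with T show "inj_on (\<lambda>(z, r, c). M z r c) (set_mset (path_entries w cs) \<union> set_mset T)"
    by (intro inj_on_subset[OF inj_M] Un_least)
  from len eq show "image_mset (\<lambda>(z, r, c). M z r c) (path_entries w cs)
                    = image_mset (\<lambda>(z, r, c). M z r c) T"
    by (simp add: path_monomial_eq_image_path_entries)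
qed

lemma index_paths_diagonal_monomial:
  assumes "n < k"
  shows "{cs \<in> index_paths k (length w) n n. path_monomial M w cs = image_mset (\<lambda>z. M z n n) W}
         = (if mset w = W then {replicate (Suc (length w)) n} else {})"
proof (intro set_eqI iffI)
  fix cs
  assume "cs \<in> {cs \<in> index_paths k (length w) n n. path_monomial M w cs = image_mset (\<lambda>z. M z n n) W}"
  then have cs: "cs \<in> index_paths k (length w) n n"
    and eq: "path_monomial M w cs = image_mset (\<lambda>(z, r, c). M z r c) (image_mset (\<lambda>z. (z, n, n)) W)"
    by (auto simp: multiset.map_comp o_def)
  from cs have len: "length cs = Suc (length w)" and hd: "hd cs = n"
    by (auto simp: index_paths_def)
  have entries: "path_entries w cs = image_mset (\<lambda>z. (z, n, n)) W"
    using path_entries_eq_if_path_monomial_eq[OF cs _ eq] assms by auto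
  then have "walk_edges cs = image_mset (\<lambda>_. (n, n)) W"
    using image_snd_path_entries[OF len] by (simp add: multiset.map_comp o_def)
  then have loops: "\<forall>e \<in># walk_edges cs. fst e = snd e"
    by auto
  have "\<forall>x \<in> set cs. x = n"
    using walk_constant_if_loops[OF loops] hd by auto
  then have "cs = replicate (Suc (length w)) n"
    using len replicate_length_same by metis
  moreover have "mset w = W"
    using image_fst_path_entries[OF len] entries by (simp add: multiset.map_comp o_def)
  ultimately show "cs \<in> (if mset w = W then {replicate (Suc (length w)) n} else {})"
    by simp
next
  fix cs
  assume "cs \<in> (if mset w = W then {replicate (Suc (length w)) n} else {})"
  then have "mset w = W" and cs: "cs = replicate (Suc (length w)) n"
    by (auto split: if_splits)
  have "path_monomial M w cs = image_mset (\<lambda>(z, r, c). M z r c) (path_entries w cs)"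
    using cs by (simp add: path_monomial_eq_image_path_entries)
  also have "\<dots> = image_mset (\<lambda>z. M z n n) W"
    unfolding cs path_entries_replicate \<open>mset w = W\<close> by (simp add: multiset.map_comp o_def)
  moreover have "cs \<in> index_paths k (length w) n n"
    using assms by (simp add: cs index_paths_def)
  ultimately show "cs \<in> {cs \<in> index_paths k (length w) n n. path_monomial M w cs = image_mset (\<lambda>z. M z n n) W}"
    by simp
qed

lemma nc_entry_diagonal:
  assumes "n < k"
  shows "nc_entry k M p n n (image_mset (\<lambda>z. M z n n) W)
         = (\<Sum>w \<in> nc_support p. if mset w = W then p w else 0)"
  unfolding nc_entry_def index_paths_diagonal_monomial[OF assms] by (intro sum.cong) auto

lemma path_monomial_two_entries_diagonal:
  assumes cs: "cs \<in> index_paths k (length w) a b"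
    and bounds: "r1 < k" "c1 < k" "r2 < k" "c2 < k"
    and "t \<ge> 2" and "s \<ge> t + 2"
    and eq: "path_monomial M w cs = replicate_mset s (M z1 r1 c1) + replicate_mset t (M z2 r2 c2)"
  shows "r1 = a \<and> c1 = a \<and> r2 = a \<and> c2 = a \<and> b = a"
proof -
  from cs have len: "length cs = Suc (length w)" and hd: "hd cs = a" and last: "last cs = b"
    by (auto simp: index_paths_def)
  have "path_entries w cs = replicate_mset s (z1, r1, c1) + replicate_mset t (z2, r2, c2)"
    using path_entries_eq_if_path_monomial_eq[OF cs] bounds eq by auto
  then have edges: "walk_edges cs = replicate_mset s (r1, c1) + replicate_mset t (r2, c2)"
    using image_snd_path_entries[OF len] by simp
  have "r1 = c1 \<and> r2 = c2"
  proof (rule loops_if_two_edge_balance)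
    fix v
    have "cs \<noteq> []" using len by auto
    then have "\<bar>int (size {#e \<in># walk_edges cs. fst e = v#}) - int (size {#e \<in># walk_edges cs. snd e = v#})\<bar> \<le> 1"
      by (simp add: walk_edges_balance)
    then show "\<bar>int s * (of_bool (r1 = v) - of_bool (c1 = v)) + int t * (of_bool (r2 = v) - of_bool (c2 = v))\<bar> \<le> 1"
      by (simp add: edges size_filter_replicate_mset algebra_simps)
  qed fact+
  with edges have loops: "\<forall>e \<in># walk_edges cs. fst e = snd e"
    by auto
  have const: "x = a" if "x \<in> set cs" for x
    using walk_constant_if_loops[OF loops that] hd by simp
  have "(r1, c1) \<in># walk_edges cs" "(r2, c2) \<in># walk_edges cs"
    using edges \<open>t \<ge> 2\<close> \<open>s \<ge> t + 2\<close> by simp_all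
  then have "r1 = a \<and> c1 = a \<and> r2 = a \<and> c2 = a"
    using walk_edges_vertices const by fastforce
  moreover have "last cs \<in> set cs"
    using len by (metis last_in_set list.size(3) nat.distinct(1))
  ultimately show ?thesis
    using const last by blast
qed


lemma nc_entry_two_entries_diagonal:
  assumes "nc_entry k M p a b (replicate_mset s (M z1 r1 c1) + replicate_mset t (M z2 r2 c2)) \<noteq> 0"
    and "r1 < k" "c1 < k" "r2 < k" "c2 < k" and "t \<ge> 2" and "s \<ge> t + 2"
  shows "r1 = a \<and> c1 = a \<and> r2 = a \<and> c2 = a \<and> b = a"
proof -
  obtain w cs where "cs \<in> index_paths k (length w) a b"
    and "path_monomial M w cs = replicate_mset s (M z1 r1 c1) + replicate_mset t (M z2 r2 c2)"
    using path_monomial_if_nc_entry_nonzero[OF assms(1)] .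
  then show ?thesis
    using path_monomial_two_entries_diagonal assms(2-7) by blast
qed

end

theorem lemma2p16:
  fixes k :: nat and P :: "nat \<Rightarrow> cpoly" and M :: "bool \<Rightarrow> nat \<Rightarrow> nat \<Rightarrow> nat"
    and p :: ncpoly and l i j s t :: nat and e :: real
  assumes "k \<ge> 1"
    and rep: "nc_representation k P M p"
    and deg: "nc_degree p > 1"
    and "l < k^2" and "i < 2 * k^2" and "j < 2 * k^2" and "i \<noteq> j"
    and "e \<noteq> 0" and "t \<ge> 2" and "s \<ge> t + 2"
    and hterm: "P l (replicate_mset s i + replicate_mset t j) = e"
  shows "\<exists>z. \<exists>a<k. M z a a = i \<and> M (\<not> z) a a = j \<and>
           (\<forall>n<k. nc_entry k M p n n (replicate_mset s (M z n n) + replicate_mset t (M (\<not> z) n n)) = e)"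
proof -
  from rep obtain \<sigma> where
    placement: "bij_betw (\<lambda>(z, r, c). M z r c) (UNIV \<times> {..<k} \<times> {..<k}) {..<2 * k^2}" and
    \<sigma>: "bij_betw \<sigma> ({..<k} \<times> {..<k}) {..<k^2}" and
    entries: "\<forall>a<k. \<forall>b<k. nc_entry k M p a b = P (\<sigma> (a, b))"
    unfolding nc_representation_def by blast
  note inj = bij_betw_imp_inj_on[OF placement]
  have "l \<in> \<sigma> ` ({..<k} \<times> {..<k})"
    using bij_betw_imp_surj_on[OF \<sigma>] \<open>l < k^2\<close> by simp
  then obtain a b where "a < k" "b < k" "l = \<sigma> (a, b)"
    by auto
  have "i \<in> (\<lambda>(z, r, c). M z r c) ` (UNIV \<times> {..<k} \<times> {..<k})"
    "j \<in> (\<lambda>(z, r, c). M z r c) ` (UNIV \<times> {..<k} \<times> {..<k})"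
    using bij_betw_imp_surj_on[OF placement] \<open>i < 2 * k^2\<close> \<open>j < 2 * k^2\<close> by simp_all
  then obtain z1 r1 c1 z2 r2 c2 where
    ij: "r1 < k" "c1 < k" "i = M z1 r1 c1" "r2 < k" "c2 < k" "j = M z2 r2 c2"
    by auto
  have e: "nc_entry k M p a b (replicate_mset s i + replicate_mset t j) = e"
    using entries hterm \<open>a < k\<close> \<open>b < k\<close> \<open>l = \<sigma> (a, b)\<close> by simp
  with \<open>e \<noteq> 0\<close> ij(3,6)
  have "nc_entry k M p a b (replicate_mset s (M z1 r1 c1) + replicate_mset t (M z2 r2 c2)) \<noteq> 0"
    by simp
  from nc_entry_two_entries_diagonal[OF inj this ij(1,2,4,5) \<open>t \<ge> 2\<close> \<open>s \<ge> t + 2\<close>] ij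
  have i: "M z1 a a = i" and "M z2 a a = j" and "b = a"
    by simp_all
  with \<open>i \<noteq> j\<close> have j: "M (\<not> z1) a a = j"
    by (cases z1; cases z2) simp_all
  have "nc_entry k M p n n (replicate_mset s (M z1 n n) + replicate_mset t (M (\<not> z1) n n)) = e"
    if "n < k" for n
    using nc_entry_diagonal[OF inj that, of p "replicate_mset s z1 + replicate_mset t (\<not> z1)"]
      nc_entry_diagonal[OF inj \<open>a < k\<close>, of p "replicate_mset s z1 + replicate_mset t (\<not> z1)"]
      e \<open>b = a\<close> i j
    by simp
  with \<open>a < k\<close> i j show ?thesis
    by blast
qed

end
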